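(* Let $p$ be a prime, $h\in\mathbb{Z}[x]$ monic, and $m\in\mathbb{Z}_p$. Then: (1) $\widehat\chi_t^{(h)}(m)$ is a nonnegative integer for every real $t>0$; (2) $\widehat\chi_t^{(h)}(m)$ is nonincreasing in $t$; (3) $v_p(h(m))=\int_0^\infty\chi_t^{(h)}(m)\,dt=\sum_{t=1}^\infty\widehat\chi_t^{(h)}(m)$ (as elements of $[0,\infty]$).
   Context: $v_p$ is the $p$-adic valuation extended to $\overline{\mathbb{Q}_p}$. For monic $h=\prod_i(x-\delta_i)$ over $\overline{\mathbb{Q}_p}$ (roots with multiplicity), $m\in\mathbb{Z}_p$, $t\ge0$: $\chi_t^{(h)}(m)=\#\{i:v_p(m-\delta_i)\ge t\}$, and for real $t>0$, $\widehat\chi_t^{(h)}(m)=\int_{\lceil t\rceil-1}^{\lceil t\rceil}\chi_s^{(h)}(m)\,ds$. *)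

theory Defs
  imports "HOL-Analysis.Analysis" "HOL-Computational_Algebra.Polynomial"
    "HOL-Computational_Algebra.Primes"
begin

text \<open>The canonical
instance is the extension of v_p to an algebraic closure of Q_p.\<close>
definition is_padic_valuation :: "nat \<Rightarrow> ('k::field \<Rightarrow> ereal) \<Rightarrow> bool" where
  "is_padic_valuation p v \<longleftrightarrow>
     (\<forall>x. v x \<noteq> -\<infinity>) \<and> (\<forall>x. v x = \<infinity> \<longleftrightarrow> x = 0) \<and>
     (\<forall>x y. v (x * y) = v x + v y) \<and>
     (\<forall>x y. min (v x) (v y) \<le> v (x + y)) \<and>
     (\<forall>n::int. n \<noteq> 0 \<longrightarrow> v (of_int n) = ereal (real (multiplicity (int p) n)))"

text \<open>m is a p-adic integer: a v-adic limit of rational integers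
(inside an algebraic closure of Q_p this set is exactly Z_p).\<close>
definition padic_integer :: "('k::field \<Rightarrow> ereal) \<Rightarrow> 'k \<Rightarrow> bool" where
  "padic_integer v m \<longleftrightarrow> (\<forall>N::nat. \<exists>a::int. ereal (real N) \<le> v (m - of_int a))"

text \<open>chi_t(m) = #{i. v(m - delta_i) >= t}, roots delta_i with multiplicity in R.\<close>
definition chi :: "('k::field \<Rightarrow> ereal) \<Rightarrow> 'k multiset \<Rightarrow> 'k \<Rightarrow> real \<Rightarrow> nat" where
  "chi v R m t = size (filter_mset (\<lambda>\<delta>. ereal t \<le> v (m - \<delta>)) R)"

definition chi_hat :: "('k::field \<Rightarrow> ereal) \<Rightarrow> 'k multiset \<Rightarrow> 'k \<Rightarrow> real \<Rightarrow> real" where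
  "chi_hat v R m t =
     integral {real_of_int (\<lceil>t\<rceil> - 1) .. real_of_int \<lceil>t\<rceil>} (\<lambda>s. real (chi v R m s))"

end

(*
  Write e\<delta> = v (m - \<delta>) for the roots \<delta> of h.  All e\<delta> are nonnegative, because roots of
  integral polynomials and p-adic integers have nonnegative valuation; both facts, and the
  integrality below, come from Gauss's lemma: the least valuation of the coefficients of a
  product of linear factors is the sum of those of the factors.

  As chi_t counts the \<delta> with t \<le> e\<delta>, its integral over [j, j + 1] is \<Sum> |[j, j + 1] \<inter> [0, e\<delta>]|
  = A (j + 1) - A j, where A K = \<Sum> min e\<delta> K.  These increments are nonincreasing in j and sum
  to \<Sum> e\<delta> = v (h m).  They are integers since A K is the Gauss valuation of the integral
  polynomial h (a + p^K x) = \<Prod> (a - \<delta> + p^K x), where a \<in> \<int> is chosen with v (m - a) \<ge> K.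
*)

theory Submission
  imports Defs
begin

lemma coeff_mult_linear:
  "coeff (f * [:c, d:]) k = c * coeff f k + (case k of 0 \<Rightarrow> 0 | Suc j \<Rightarrow> d * coeff f j)"
  by (simp add: mult_pCons_right coeff_pCons split: nat.splits)

lemma pcompose_prod_mset: "pcompose (\<Prod>x\<in>#A. f x) q = (\<Prod>x\<in>#A. pcompose (f x) q)"
  by (induction A) (simp_all add: pcompose_mult pcompose_1)

lemma sum_mset_nonneg:
  fixes f :: "'a \<Rightarrow> 'b::ordered_comm_monoid_add"
  shows "(\<And>x. x \<in># A \<Longrightarrow> 0 \<le> f x) \<Longrightarrow> 0 \<le> (\<Sum>x\<in>#A. f x)"
  by (induction A) auto

lemma sum_mset_le_member:
  fixes f :: "'a \<Rightarrow> 'b::ordered_comm_monoid_add"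
  assumes "\<And>y. y \<in># A \<Longrightarrow> f y \<le> 0" "x \<in># A"
  shows "(\<Sum>y\<in>#A. f y) \<le> f x"
proof -
  obtain A' where A: "A = add_mset x A'"
    using assms(2) by (metis multi_member_split)
  have "(\<Sum>y\<in>#A'. f y) \<le> 0"
    using sum_mset_mono[of A' f "\<lambda>_. 0"] assms(1) A by auto
  then show ?thesis
    using A add_left_mono[of _ 0 "f x"] by simp
qed

lemma ereal_sum_mset: "ereal (\<Sum>x\<in>#A. f x) = (\<Sum>x\<in>#A. ereal (f x))"
  by (induction A) (simp_all flip: plus_ereal.simps(1))

lemma enn2ereal_sum_mset: "enn2ereal (\<Sum>x\<in>#A. f x) = (\<Sum>x\<in>#A. enn2ereal (f x))"
  by (induction A) (simp_all add: plus_ennreal.rep_eq zero_ennreal.rep_eq)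

lemma ennreal_sum_mset:
  "(\<And>x. x \<in># A \<Longrightarrow> 0 \<le> f x) \<Longrightarrow> ennreal (\<Sum>x\<in>#A. f x) = (\<Sum>x\<in>#A. ennreal (f x))"
  by (induction A) (auto simp: ennreal_plus sum_mset_nonneg)

lemma suminf_sum_mset_ennreal:
  fixes f :: "'a \<Rightarrow> nat \<Rightarrow> ennreal"
  shows "(\<Sum>n. \<Sum>x\<in>#A. f x n) = (\<Sum>x\<in>#A. \<Sum>n. f x n)"
proof (induction A)
  case empty
  then show ?case by simp
next
  case (add y A)
  then show ?case
    by (simp add: suminf_add[OF summableI summableI, symmetric])
qed

locale padic_valuation =
  fixes p :: nat and v :: "'k::field \<Rightarrow> ereal"
  assumes valuation: "is_padic_valuation p v"
begin

lemma v_not_minf: "v x \<noteq> -\<infinity>"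
  and v_eq_infinity_iff: "v x = \<infinity> \<longleftrightarrow> x = 0"
  and v_mult: "v (x * y) = v x + v y"
  and v_add: "min (v x) (v y) \<le> v (x + y)"
  and v_of_int: "n \<noteq> 0 \<Longrightarrow> v (of_int n) = ereal (real (multiplicity (int p) n))"
  using valuation unfolding is_padic_valuation_def by simp_all

lemma v_zero [simp]: "v 0 = \<infinity>"
  using v_eq_infinity_iff by simp

lemma v_one [simp]: "v 1 = 0"
  using v_of_int[of 1] by simp

lemma v_uminus: "v (- x) = v x"
proof -
  have "v (-1) = 0"
    using v_of_int[of "-1"] by (simp add: multiplicity_unit_right)
  then show ?thesis
    using v_mult[of "-1" x] by simp
qed

lemma v_diff_commute: "v (x - y) = v (y - x)"
  using v_uminus[of "x - y"] by simp

lemma v_diff_nonneg: "0 \<le> v x \<Longrightarrow> 0 \<le> v y \<Longrightarrow> 0 \<le> v (x - y)"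
  using v_add[of x "- y"] v_uminus[of y] by (simp add: min_def split: if_splits)

lemma v_add_eq_left: assumes "v x < v y" shows "v (x + y) = v x"
proof -
  have "min (v (x + y)) (v (- y)) \<le> v x"
    using v_add[of "x + y" "- y"] by simp
  then have "v (x + y) \<le> v x"
    using assms v_uminus[of y] by (auto simp: min_def split: if_splits)
  with assms v_add[of x y] show ?thesis by simp
qed

lemma v_prod_mset: "v (\<Prod>x\<in>#A. f x) = (\<Sum>x\<in>#A. v (f x))"
  by (induction A) (simp_all add: v_mult)

lemma v_Ints_nat:
  assumes "x \<in> \<int>" "x \<noteq> 0"
  shows "\<exists>k::nat. v x = ereal (real k)"
proof -
  obtain n where n: "x = of_int n"
    using assms(1) by (rule Ints_cases)
  with assms(2) have "n \<noteq> 0" by auto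
  then show ?thesis
    using v_of_int n by blast
qed

lemma v_Ints_nonneg: "x \<in> \<int> \<Longrightarrow> 0 \<le> v x"
  using v_Ints_nat[of x] by (cases "x = 0") auto

subsection \<open>The Gauss valuation of a polynomial\<close>

definition is_gauss_valuation :: "'k poly \<Rightarrow> ereal \<Rightarrow> bool" where
  "is_gauss_valuation f w \<longleftrightarrow> (\<forall>k. w \<le> v (coeff f k)) \<and> (\<exists>k. v (coeff f k) = w)"

lemma v_coeff_mult_linear_lower:
  assumes "\<And>k. w \<le> v (coeff f k)"
  shows "w + min (v c) (v d) \<le> v (coeff (f * [:c, d:]) k)"
proof -
  have "w + min (v c) (v d) \<le> v (c * coeff f k)"
    using add_mono[OF assms[of k] min.cobounded1] by (simp add: v_mult add.commute)
  moreover have "w + min (v c) (v d) \<le> v (case k of 0 \<Rightarrow> 0 | Suc j \<Rightarrow> d * coeff f j)"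
    using add_mono[OF assms min.cobounded2] by (auto simp: v_mult add.commute split: nat.split)
  ultimately show ?thesis
    unfolding coeff_mult_linear by (meson min.boundedI order_trans v_add)
qed

text \<open>If c gives the minimum, look at the lowest coefficient of f of valuation w: the
  corresponding coefficient of the product has valuation w + v c, since the other summand
  there has strictly larger valuation.\<close>

lemma v_coeff_mult_linear_attained_left:
  assumes f: "is_gauss_valuation f w" and "\<bar>w\<bar> \<noteq> \<infinity>" and "c \<noteq> 0" and "v c \<le> v d"
  shows "\<exists>k. v (coeff (f * [:c, d:]) k) = w + v c"
proof -
  have lb: "w \<le> v (coeff f k)" for k
    using f unfolding is_gauss_valuation_def by blast
  define k0 where "k0 = (LEAST k. v (coeff f k) = w)"
  have k0: "v (coeff f k0) = w"
    unfolding k0_def by (rule LeastI_ex) (use f is_gauss_valuation_def in blast)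
  have vc: "\<bar>v c\<bar> \<noteq> \<infinity>"
    using \<open>c \<noteq> 0\<close> v_eq_infinity_iff v_not_minf by auto
  have "w + v c < v (case k0 of 0 \<Rightarrow> 0 | Suc j \<Rightarrow> d * coeff f j)"
  proof (cases k0)
    case 0
    then show ?thesis using assms(2) vc by auto
  next
    case (Suc j)
    then have "w < v (coeff f j)"
      using lb[of j] not_less_Least[of j "\<lambda>k. v (coeff f k) = w"] unfolding k0_def by auto
    then have "w + v c < v (coeff f j) + v c"
      using ereal_less_add[OF vc] by (metis add.commute)
    also have "\<dots> \<le> v (coeff f j) + v d"
      using \<open>v c \<le> v d\<close> by (rule add_left_mono)
    finally show ?thesis using Suc by (simp add: v_mult add.commute)
  qed
  moreover have "v (c * coeff f k0) = w + v c"
    using k0 by (simp add: v_mult add.commute)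
  ultimately show ?thesis
    unfolding coeff_mult_linear using v_add_eq_left by (intro exI[of _ k0]) simp
qed

text \<open>Symmetrically, when d wins strictly, use the highest coefficient of minimal valuation.\<close>

lemma v_coeff_mult_linear_attained_right:
  assumes f: "is_gauss_valuation f w" and "\<bar>w\<bar> \<noteq> \<infinity>" and "v d < v c"
  shows "\<exists>k. v (coeff (f * [:c, d:]) k) = w + v d"
proof -
  have lb: "w \<le> v (coeff f k)" for k
    using f unfolding is_gauss_valuation_def by blast
  have vd: "\<bar>v d\<bar> \<noteq> \<infinity>"
    using \<open>v d < v c\<close> v_not_minf by auto
  have bound: "k \<le> degree f" if "v (coeff f k) = w" for k
  proof (rule ccontr)
    assume "\<not> k \<le> degree f"
    then have "w = \<infinity>"
      using that by (simp add: coeff_eq_0)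
    then show False
      using assms(2) by simp
  qed
  obtain k where k: "v (coeff f k) = w"
    using f unfolding is_gauss_valuation_def by blast
  define k1 where "k1 = (GREATEST k. v (coeff f k) = w)"
  have k1: "v (coeff f k1) = w"
    unfolding k1_def by (rule GreatestI_nat[where P = "\<lambda>k. v (coeff f k) = w", OF k bound])
  have "v (coeff f (Suc k1)) \<noteq> w"
  proof
    assume "v (coeff f (Suc k1)) = w"
    then have "Suc k1 \<le> k1"
      unfolding k1_def by (rule Greatest_le_nat[where P = "\<lambda>k. v (coeff f k) = w", OF _ bound])
    then show False by simp
  qed
  then have "w < v (coeff f (Suc k1))"
    using lb[of "Suc k1"] by simp
  then have "w + v d < v (coeff f (Suc k1)) + v d"
    using ereal_less_add[OF vd] by (metis add.commute)
  also have "\<dots> \<le> v (coeff f (Suc k1)) + v c"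
    using \<open>v d < v c\<close> by (intro add_left_mono) simp
  finally have "w + v d < v (c * coeff f (Suc k1))"
    by (simp add: v_mult add.commute)
  moreover have "v (d * coeff f k1) = w + v d"
    using k1 by (simp add: v_mult add.commute)
  ultimately have "v (c * coeff f (Suc k1) + d * coeff f k1) = w + v d"
    using v_add_eq_left by (simp add: add.commute)
  then show ?thesis
    unfolding coeff_mult_linear by (intro exI[of _ "Suc k1"]) simp
qed

lemma is_gauss_valuation_mult_linear:
  assumes f: "is_gauss_valuation f w"
  shows "is_gauss_valuation (f * [:c, d:]) (w + min (v c) (v d))"
proof (cases "w = \<infinity> \<or> (c = 0 \<and> d = 0)")
  case True
  then have "w + min (v c) (v d) = \<infinity>"
    using v_not_minf by auto
  then show ?thesis
    using v_coeff_mult_linear_lower f unfolding is_gauss_valuation_def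
    by (metis ereal_infty_less_eq(1))
next
  case False
  have w: "\<bar>w\<bar> \<noteq> \<infinity>"
    using False f v_not_minf unfolding is_gauss_valuation_def by auto
  have "\<exists>k. v (coeff (f * [:c, d:]) k) = w + min (v c) (v d)"
  proof (cases "v c \<le> v d")
    case True
    with False have "c \<noteq> 0"
      using v_eq_infinity_iff by force
    then show ?thesis
      using v_coeff_mult_linear_attained_left[OF f w _ True] True by (simp add: min.absorb1)
  next
    case False
    then show ?thesis
      using v_coeff_mult_linear_attained_right[OF f w] by (simp add: min.absorb2)
  qed
  then show ?thesis
    using v_coeff_mult_linear_lower f unfolding is_gauss_valuation_def by blast
qed

lemma is_gauss_valuation_prod_linear:
  "is_gauss_valuation (\<Prod>x\<in>#A. [:c x, d x:]) (\<Sum>x\<in>#A. min (v (c x)) (v (d x)))"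
proof (induction A)
  case empty
  show ?case
    by (auto simp: is_gauss_valuation_def coeff_1 intro: exI[of _ 0])
next
  case (add x A)
  from is_gauss_valuation_mult_linear[OF this, of "c x" "d x"] show ?case
    by (simp add: mult.commute add.commute)
qed

lemma is_gauss_valuation_Ints_nonneg:
  assumes "is_gauss_valuation f w" "\<And>k. coeff f k \<in> \<int>"
  shows "0 \<le> w"
  using assms v_Ints_nonneg unfolding is_gauss_valuation_def by metis

lemma is_gauss_valuation_Ints_nat:
  assumes "is_gauss_valuation f w" "\<And>k. coeff f k \<in> \<int>" "f \<noteq> 0"
  shows "\<exists>n::nat. w = ereal (real n)"
proof -
  obtain k where "coeff f k \<noteq> 0"
    using \<open>f \<noteq> 0\<close> by (metis poly_eqI coeff_0)
  then have "v (coeff f k) \<noteq> \<infinity>"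
    using v_eq_infinity_iff by blast
  then have "w \<noteq> \<infinity>"
    using assms(1) unfolding is_gauss_valuation_def by (metis ereal_infty_less_eq(1))
  moreover obtain j where "v (coeff f j) = w"
    using assms(1) unfolding is_gauss_valuation_def by blast
  ultimately show ?thesis
    using v_Ints_nat[OF assms(2)[of j]] by force
qed

subsection \<open>Roots of integral polynomials and p-adic integers\<close>

text \<open>The Gauss valuation of \<open>\<Prod>(x - \<delta>)\<close> is \<open>\<Sum> min (v \<delta>) 0\<close>, and it is nonnegative because the
  coefficients are integers; so every term vanishes.\<close>

lemma root_valuation_nonneg:
  assumes "\<And>k. coeff (\<Prod>\<delta>\<in>#R. [:-\<delta>, 1:]) k \<in> \<int>" and "x \<in># R"
  shows "0 \<le> v x"
proof -
  have "0 \<le> (\<Sum>\<delta>\<in>#R. min (v (-\<delta>)) (v 1))"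
    by (rule is_gauss_valuation_Ints_nonneg[OF is_gauss_valuation_prod_linear assms(1)])
  also have "\<dots> \<le> min (v (-x)) (v 1)"
    by (rule sum_mset_le_member) (use assms(2) in auto)
  finally show ?thesis
    by (simp add: v_uminus)
qed

lemma padic_integer_valuation_nonneg:
  assumes "padic_integer v m" shows "0 \<le> v m"
proof -
  obtain a :: int where "0 \<le> v (m - of_int a)"
    using assms unfolding padic_integer_def by (metis of_nat_0 zero_ereal_def)
  moreover have "min (v (m - of_int a)) (v (of_int a)) \<le> v m"
    using v_add[of "m - of_int a" "of_int a"] by simp
  ultimately show ?thesis
    using v_Ints_nonneg[of "of_int a"] by (meson Ints_of_int min.boundedI order_trans)
qed

lemma min_valuation_diff_cong:
  assumes "r \<le> v (m - a)"
  shows "min (v (a - x)) r = min (v (m - x)) r"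
proof -
  have "min (v (a - m)) (v (m - x)) \<le> v (a - x)"
    using v_add[of "a - m" "m - x"] by simp
  moreover have "min (v (m - a)) (v (a - x)) \<le> v (m - x)"
    using v_add[of "m - a" "a - x"] by simp
  ultimately show ?thesis
    using assms v_diff_commute[of m a] by (auto simp: min_def split: if_splits)
qed

text \<open>Choose an integer a with \<open>v (m - a) \<ge> K\<close>.  Then the truncated sum is the Gauss valuation
  of the integral polynomial \<open>h (a + p\<^sup>K x) = \<Prod>(a - \<delta> + p\<^sup>K x)\<close>, hence a natural number.\<close>

lemma sum_min_valuation_nat:
  assumes "prime p"
    and integral: "\<And>k. coeff (\<Prod>\<delta>\<in>#R. [:-\<delta>, 1:]) k \<in> \<int>"
    and "padic_integer v m"
  shows "\<exists>n::nat. (\<Sum>\<delta>\<in>#R. min (v (m - \<delta>)) (ereal (real K))) = ereal (real n)"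
proof -
  obtain a :: int where a: "ereal (real K) \<le> v (m - of_int a)"
    using assms(3) unfolding padic_integer_def by blast
  define P :: 'k where "P = of_int (int p ^ K)"
  have "multiplicity (int p) (int p ^ K) = K"
    using \<open>prime p\<close> by (simp add: multiplicity_prime_power prime_imp_prime_elem)
  then have vP: "v P = ereal (real K)"
    unfolding P_def using \<open>prime p\<close> v_of_int[of "int p ^ K"] by (simp add: prime_gt_0_nat)
  define G where "G = pcompose (\<Prod>\<delta>\<in>#R. [:-\<delta>, 1:]) [:of_int a, P:]"
  have G: "G = (\<Prod>\<delta>\<in>#R. [:of_int a - \<delta>, P:])"
    unfolding G_def pcompose_prod_mset by (simp add: pcompose_pCons algebra_simps)
  have "coeff G k \<in> \<int>" for k
    unfolding G_def
    by (rule coeff_pcompose_semiring_closed) (auto simp: integral coeff_pCons P_def split: nat.split)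
  moreover have "G \<noteq> 0"
    unfolding G using vP by auto
  moreover have "is_gauss_valuation G (\<Sum>\<delta>\<in>#R. min (v (m - \<delta>)) (ereal (real K)))"
    using is_gauss_valuation_prod_linear[of "\<lambda>\<delta>. of_int a - \<delta>" "\<lambda>_. P" R]
    unfolding G vP min_valuation_diff_cong[OF a] .
  ultimately show ?thesis
    using is_gauss_valuation_Ints_nat by blast
qed

end

subsection \<open>Integrating the counting function\<close>

definition length_below :: "ereal \<Rightarrow> real \<Rightarrow> real \<Rightarrow> real" where
  "length_below e a b =
     (case e of ereal x \<Rightarrow> max 0 (min b x - a) | PInfty \<Rightarrow> b - a | MInfty \<Rightarrow> 0)"

lemma length_below_nonneg: "a \<le> b \<Longrightarrow> 0 \<le> length_below e a b"
  by (cases e) (auto simp: length_below_def)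

lemma length_below_from_zero: "0 \<le> e \<Longrightarrow> ereal (length_below e 0 (real K)) = min e (ereal (real K))"
  by (cases e) (auto simp: length_below_def min.commute)

lemma length_below_split:
  "0 \<le> e \<Longrightarrow> length_below e 0 (real (Suc j)) = length_below e 0 (real j) + length_below e (real j) (real (Suc j))"
  by (cases e) (auto simp: length_below_def max_def min_def)

lemma length_below_antimono:
  "j \<le> j' \<Longrightarrow> length_below e (real j') (real (Suc j')) \<le> length_below e (real j) (real (Suc j))"
  by (cases e) (auto simp: length_below_def max_def min_def)

lemma has_integral_indicator_below:
  assumes "a \<le> b"
  shows "(indicator {s. ereal s \<le> e} has_integral length_below e a b) {a..b}"
proof -
  have "indicator {s. ereal s \<le> e} = (\<lambda>s. if s \<in> {s. ereal s \<le> e} then 1 else (0::real))"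
    by (auto simp: indicator_def fun_eq_iff)
  then have restrict: "(indicator {s. ereal s \<le> e} has_integral l) {a..b}
      \<longleftrightarrow> ((\<lambda>_. 1::real) has_integral l) ({s. ereal s \<le> e} \<inter> {a..b})" for l
    by (simp only: has_integral_restrict_Int)
  show ?thesis
  proof (cases e)
    case (real x)
    then have "{s. ereal s \<le> e} \<inter> {a..b} = {a..min b x}"
      by auto
    moreover have "((\<lambda>_. 1::real) has_integral length_below e a b) {a..min b x}"
      using has_integral_const_real[of "1::real" a "min b x"] assms
      by (simp add: real length_below_def content_real_if max_def)
    ultimately show ?thesis
      unfolding restrict by simp
  next
    case PInf
    then have "{s. ereal s \<le> e} \<inter> {a..b} = {a..b}"
      by auto
    moreover have "((\<lambda>_. 1::real) has_integral length_below e a b) {a..b}"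
      using has_integral_const_real[of "1::real" a b] assms
      by (simp add: PInf length_below_def)
    ultimately show ?thesis
      unfolding restrict by simp
  next
    case MInf
    then show ?thesis
      unfolding restrict by (simp add: length_below_def)
  qed
qed

lemma chi_add_mset:
  "real (chi v (add_mset d R) m s) = indicator {s. ereal s \<le> v (m - d)} s + real (chi v R m s)"
  by (simp add: chi_def indicator_def)

lemma chi_has_integral:
  assumes "a \<le> b"
  shows "((\<lambda>s. real (chi v R m s)) has_integral (\<Sum>d\<in>#R. length_below (v (m - d)) a b)) {a..b}"
proof (induction R)
  case empty
  then show ?case by (simp add: chi_def)
next
  case (add d R)
  show ?case
    unfolding chi_add_mset
    using has_integral_add[OF has_integral_indicator_below[OF assms] add.IH] by simp
qed

lemma chi_hat_eq_sum_length_below: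
  assumes "\<lceil>t\<rceil> = int (Suc j)"
  shows "chi_hat v R m t = (\<Sum>d\<in>#R. length_below (v (m - d)) (real j) (real (Suc j)))"
proof -
  have "real_of_int (\<lceil>t\<rceil> - 1) = real j" "real_of_int \<lceil>t\<rceil> = real (Suc j)"
    using assms by auto
  then show ?thesis
    unfolding chi_hat_def by (simp only:) (rule integral_unique[OF chi_has_integral], simp)
qed

lemma ceiling_eq_Suc_nat: "0 < t \<Longrightarrow> \<lceil>t\<rceil> = int (Suc (nat (\<lceil>t\<rceil> - 1)))"
  by simp

lemma chi_hat_antimono:
  assumes "0 < s" "s \<le> t"
  shows "chi_hat v R m t \<le> chi_hat v R m s"
proof -
  define i j where "i = nat (\<lceil>s\<rceil> - 1)" and "j = nat (\<lceil>t\<rceil> - 1)"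
  have "i \<le> j"
    unfolding i_def j_def using ceiling_mono[OF assms(2)] by simp
  have "0 < t"
    using assms by simp
  have "chi_hat v R m t = (\<Sum>d\<in>#R. length_below (v (m - d)) (real j) (real (Suc j)))"
    unfolding j_def by (rule chi_hat_eq_sum_length_below[OF ceiling_eq_Suc_nat[OF \<open>0 < t\<close>]])
  also have "\<dots> \<le> (\<Sum>d\<in>#R. length_below (v (m - d)) (real i) (real (Suc i)))"
    using \<open>i \<le> j\<close> by (intro sum_mset_mono length_below_antimono)
  also have "\<dots> = chi_hat v R m s"
    unfolding i_def by (rule chi_hat_eq_sum_length_below[OF ceiling_eq_Suc_nat[OF \<open>0 < s\<close>], symmetric])
  finally show ?thesis .
qed

text \<open>\<open>chi_hat\<close> on \<open>(j, j + 1]\<close> is the increment of the truncated sums \<open>\<Sum> min (v (m - \<delta>)) K\<close>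
  between \<open>K = j\<close> and \<open>K = j + 1\<close>, so it is a natural number once these sums are.\<close>

lemma chi_hat_Nats:
  assumes nonneg: "\<And>d. d \<in># R \<Longrightarrow> 0 \<le> v (m - d)"
    and truncated_sums_nat: "\<And>K::nat. \<exists>n::nat. (\<Sum>d\<in>#R. min (v (m - d)) (ereal (real K))) = ereal (real n)"
    and "0 < t"
  shows "chi_hat v R m t \<in> \<nat>"
proof -
  define A where "A K = (\<Sum>d\<in>#R. length_below (v (m - d)) 0 (real K))" for K
  have A_nat: "\<exists>n::nat. A K = real n" for K
  proof -
    have "ereal (A K) = (\<Sum>d\<in>#R. ereal (length_below (v (m - d)) 0 (real K)))"
      unfolding A_def by (rule ereal_sum_mset)
    also have "\<dots> = (\<Sum>d\<in>#R. min (v (m - d)) (ereal (real K)))"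
      by (intro arg_cong[where f = sum_mset] image_mset_cong length_below_from_zero nonneg)
    finally show ?thesis
      using truncated_sums_nat[of K] by auto
  qed
  define j where "j = nat (\<lceil>t\<rceil> - 1)"
  have "A (Suc j) = (\<Sum>d\<in>#R. length_below (v (m - d)) 0 (real j)
                         + length_below (v (m - d)) (real j) (real (Suc j)))"
    unfolding A_def
    by (rule arg_cong[where f = sum_mset], rule image_mset_cong, rule length_below_split, rule nonneg)
  also have "\<dots> = A j + chi_hat v R m t"
    unfolding A_def sum_mset.distrib j_def
    by (simp only: chi_hat_eq_sum_length_below[OF ceiling_eq_Suc_nat[OF \<open>0 < t\<close>]])
  finally have step: "A (Suc j) = A j + chi_hat v R m t" .
  have "0 \<le> chi_hat v R m t"
    unfolding chi_hat_eq_sum_length_below[OF ceiling_eq_Suc_nat[OF \<open>0 < t\<close>]]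
    by (rule sum_mset_nonneg) (simp add: length_below_nonneg)
  moreover obtain n0 n1 where n0: "A j = real n0" and n1: "A (Suc j) = real n1"
    using A_nat by blast
  ultimately have "n0 \<le> n1"
    using step by simp
  then have "chi_hat v R m t = real (n1 - n0)"
    using step n0 n1 by (simp add: of_nat_diff)
  then show ?thesis
    by simp
qed

lemma emeasure_lborel_Ici_infinite: "emeasure lborel {a::real..} = \<infinity>"
proof (rule ccontr)
  assume "emeasure lborel {a..} \<noteq> \<infinity>"
  then obtain r where r: "emeasure lborel {a..} = ennreal r" "0 \<le> r"
    by (cases "emeasure lborel {a..}") auto
  have "emeasure lborel {a..a + r + 1} \<le> emeasure lborel {a..}"
    by (rule emeasure_mono) auto
  then show False
    using r by (simp add: ennreal_le_iff)
qed

lemma nn_integral_indicator_below: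
  assumes "0 \<le> e"
  shows "(\<integral>\<^sup>+ s\<in>{0..}. indicator {s. ereal s \<le> e} s \<partial>lborel) = e2ennreal e"
proof (cases e)
  case (real x)
  have "(\<lambda>s. indicator {s. ereal s \<le> e} s * indicator {0..} s :: ennreal) = indicator {0..x}"
    by (auto simp: real indicator_def fun_eq_iff)
  then show ?thesis
    using real assms by simp
next
  case PInf
  have "(\<lambda>s. indicator {s. ereal s \<le> e} s * indicator {0..} s :: ennreal) = indicator {0..}"
    by (auto simp: PInf indicator_def fun_eq_iff)
  then show ?thesis
    using PInf by (simp add: emeasure_lborel_Ici_infinite)
next
  case MInf
  then show ?thesis
    using assms by simp
qed

lemma ennreal_chi_add_mset:
  "ennreal (real (chi v (add_mset d R) m s))
     = indicator {s. ereal s \<le> v (m - d)} s + ennreal (real (chi v R m s))"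
  by (simp add: chi_add_mset ennreal_plus ennreal_indicator)

lemma borel_measurable_chi: "(\<lambda>s. ennreal (real (chi v R m s))) \<in> borel_measurable lborel"
proof (induction R)
  case empty
  then show ?case by (simp add: chi_def)
next
  case (add d R)
  have "{s. ereal s \<le> v (m - d)} \<in> sets lborel"
    by measurable
  with add show ?case
    unfolding ennreal_chi_add_mset by measurable
qed

lemma nn_integral_chi:
  assumes "\<And>d. d \<in># R \<Longrightarrow> 0 \<le> v (m - d)"
  shows "(\<integral>\<^sup>+ s\<in>{0..}. ennreal (real (chi v R m s)) \<partial>lborel) = (\<Sum>d\<in>#R. e2ennreal (v (m - d)))"
  using assms
proof (induction R)
  case empty
  then show ?case by (simp add: chi_def)
next
  case (add d R)
  have "{s. ereal s \<le> v (m - d)} \<in> sets lborel"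
    by measurable
  then have "(\<integral>\<^sup>+ s\<in>{0..}. ennreal (real (chi v (add_mset d R) m s)) \<partial>lborel)
      = (\<integral>\<^sup>+ s\<in>{0..}. indicator {s. ereal s \<le> v (m - d)} s \<partial>lborel)
        + (\<integral>\<^sup>+ s\<in>{0..}. ennreal (real (chi v R m s)) \<partial>lborel)"
    unfolding ennreal_chi_add_mset distrib_right
    by (intro nn_integral_add) (use borel_measurable_chi in measurable)
  with add show ?case
    by (simp add: nn_integral_indicator_below)
qed

lemma suminf_length_below:
  assumes "0 \<le> e"
  shows "(\<Sum>n. ennreal (length_below e (real n) (real (Suc n)))) = e2ennreal e"
proof -
  have partial_sums: "(\<Sum>n<K. ennreal (length_below e (real n) (real (Suc n))))
      = ennreal (length_below e 0 (real K))" for K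
  proof (induction K)
    case 0
    then show ?case
      using assms by (cases e) (simp_all add: length_below_def)
  next
    case (Suc K)
    then show ?case
      using length_below_split[OF assms, of K] length_below_nonneg[of 0 "real K" e]
        length_below_nonneg[of "real K" "real (Suc K)" e]
      by (simp add: ennreal_plus[symmetric] del: ennreal_plus)
  qed
  have "(\<lambda>K. ennreal (length_below e 0 (real K))) \<longlonglongrightarrow> e2ennreal e"
  proof (cases e)
    case (real x)
    have "eventually (\<lambda>K. ennreal (length_below e 0 (real K)) = e2ennreal e) sequentially"
      unfolding eventually_sequentially
    proof (intro exI allI impI)
      fix K assume "nat \<lceil>x\<rceil> \<le> K"
      then have "x \<le> real K" by linarith
      then show "ennreal (length_below e 0 (real K)) = e2ennreal e"
        using real assms by (simp add: length_below_def)
    qed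
    then show ?thesis by (rule tendsto_eventually)
  next
    case PInf
    then have "(\<lambda>K. ennreal (length_below e 0 (real K))) = of_nat"
      by (auto simp: length_below_def ennreal_of_nat_eq_real_of_nat)
    then show ?thesis
      using of_nat_tendsto_top_ennreal PInf by simp
  next
    case MInf
    then show ?thesis using assms by simp
  qed
  then show ?thesis
    unfolding partial_sums[symmetric] by (rule sums_unique[unfolded sums_def, symmetric])
qed

lemma nn_integral_chi_eq_suminf_chi_hat:
  assumes nonneg: "\<And>d. d \<in># R \<Longrightarrow> 0 \<le> v (m - d)"
  shows "(\<integral>\<^sup>+ s\<in>{0..}. ennreal (real (chi v R m s)) \<partial>lborel)
    = (\<Sum>n. ennreal (chi_hat v R m (real (Suc n))))"
proof -
  have "(\<integral>\<^sup>+ s\<in>{0..}. ennreal (real (chi v R m s)) \<partial>lborel) = (\<Sum>d\<in>#R. e2ennreal (v (m - d)))"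
    by (rule nn_integral_chi[of R v m, OF nonneg])
  also have "\<dots> = (\<Sum>d\<in>#R. \<Sum>n. ennreal (length_below (v (m - d)) (real n) (real (Suc n))))"
    by (rule arg_cong[where f = sum_mset], rule image_mset_cong, rule suminf_length_below[symmetric],
        rule nonneg)
  also have "\<dots> = (\<Sum>n. \<Sum>d\<in>#R. ennreal (length_below (v (m - d)) (real n) (real (Suc n))))"
    by (rule suminf_sum_mset_ennreal[symmetric])
  also have "\<dots> = (\<Sum>n. ennreal (chi_hat v R m (real (Suc n))))"
  proof (rule suminf_cong)
    fix n
    show "(\<Sum>d\<in>#R. ennreal (length_below (v (m - d)) (real n) (real (Suc n))))
        = ennreal (chi_hat v R m (real (Suc n)))"
      unfolding chi_hat_eq_sum_length_below[OF ceiling_of_nat]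
      by (rule ennreal_sum_mset[symmetric]) (simp add: length_below_nonneg)
  qed
  finally show ?thesis .
qed

theorem mainTheorem13:
  fixes p :: nat and h :: "int poly" and v :: "'k::field \<Rightarrow> ereal"
    and R :: "'k multiset" and m :: 'k
  assumes "prime p"
    and "lead_coeff h = 1"
    and "is_padic_valuation p v"
    and "map_poly of_int h = (\<Prod>\<delta>\<in>#R. [:- \<delta>, 1:])"
    and "padic_integer v m"
  shows "(\<forall>t::real. t > 0 \<longrightarrow> chi_hat v R m t \<in> \<nat>)
    \<and> (\<forall>s t::real. 0 < s \<longrightarrow> s \<le> t \<longrightarrow> chi_hat v R m t \<le> chi_hat v R m s)
    \<and> v (poly (map_poly of_int h) m)
        = enn2ereal (\<integral>\<^sup>+ s\<in>{0..}. ennreal (real (chi v R m s)) \<partial>lborel)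
    \<and> (\<integral>\<^sup>+ s\<in>{0..}. ennreal (real (chi v R m s)) \<partial>lborel)
        = (\<Sum>n. ennreal (chi_hat v R m (real (Suc n))))"
proof -
  interpret padic_valuation p v
    by (rule padic_valuation.intro) fact
  have ints: "coeff (\<Prod>\<delta>\<in>#R. [:-\<delta>, 1:]) k \<in> \<int>" for k
    unfolding assms(4)[symmetric] by (simp add: coeff_map_poly)
  have nonneg: "0 \<le> v (m - d)" if "d \<in># R" for d
    using v_diff_nonneg padic_integer_valuation_nonneg[OF assms(5)]
      root_valuation_nonneg[OF ints that] by blast
  have "v (poly (map_poly of_int h) m) = (\<Sum>d\<in>#R. v (m - d))"
    unfolding assms(4) poly_prod_mset v_prod_mset by simp
  also have "\<dots> = enn2ereal (\<integral>\<^sup>+ s\<in>{0..}. ennreal (real (chi v R m s)) \<partial>lborel)"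
    by (simp add: nn_integral_chi nonneg enn2ereal_sum_mset enn2ereal_e2ennreal cong: image_mset_cong)
  finally show ?thesis
    using chi_hat_Nats[of R v m, OF nonneg sum_min_valuation_nat[OF assms(1) ints assms(5)]]
      chi_hat_antimono nn_integral_chi_eq_suminf_chi_hat[of R v m, OF nonneg]
    by blast
qed

end
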